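(* For any $0<\theta<1$ and all $\lambda_1,\lambda_2>0$ with $\lambda_1+\lambda_2<1$, \[ \dot{C}_{\mathrm{DI}}\big(A^{(\theta)}\big)=\lim_{n\to\infty}\frac{1}{n\log n}\log N_{\mathrm{DI}}(n,\lambda_1,\lambda_2)=1. \]
   Context: The channel $A=A^{(\theta)}$ has input and output alphabet $\mathbb{R}/\mathbb{Z}$ and maps $x$ to $A_x$, the uniform probability distribution (w.r.t. Lebesgue measure) on the arc $[x,x+\theta]\bmod\mathbb{Z}$. For $x^n\in(\mathbb{R}/\mathbb{Z})^n$, $A_{x^n}=A_{x_1}\otimes\cdots\otimes A_{x_n}$. An $(n,N,\lambda_1,\lambda_2)$-DI code is a family $\{(u_j,\mathcal{E}_j):j\in[N]\}$ with $u_j\in(\mathbb{R}/\mathbb{Z})^n$ and measurable $\mathcal{E}_j\subset(\mathbb{R}/\mathbb{Z})^n$, such that $A_{u_j}(\mathcal{E}_j)\ge1-\lambda_1$ for all $j$ and $A_{u_j}(\mathcal{E}_k)\le\lambda_2$ for $j\ne k$; $N_{\mathrm{DI}}(n,\lambda_1,\lambda_2)$ is the largest such $N$. Logarithms base 2; $\dot{C}_{\mathrm{DI}}(A)=\inf_{\lambda_1,\lambda_2>0}\liminf_{n\to\infty}\frac{1}{n\log n}\log N_{\mathrm{DI}}(n,\lambda_1,\lambda_2)$. *)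

theory Defs
  imports "HOL-Probability.Probability"
begin

text \<open>The circle R/Z is represented by the half-open interval [0,1) with its Borel
  sigma-algebra; a point of (R/Z)^n is a function in an extensional function on {..<n} with values in [0,1).\<close>

definition torus :: "nat \<Rightarrow> (nat \<Rightarrow> real) measure" where
  "torus n = PiM {..<n} (\<lambda>_. restrict_space borel {0..<1::real})"

definition chan :: "real \<Rightarrow> nat \<Rightarrow> (nat \<Rightarrow> real) \<Rightarrow> (nat \<Rightarrow> real) measure" where
  "chan \<theta> n x = distr (PiM {..<n} (\<lambda>_. uniform_measure lborel {0..\<theta>})) (torus n)
      (\<lambda>t. \<lambda>i\<in>{..<n}. frac (x i + t i))"

definition is_DI_code ::
  "real \<Rightarrow> nat \<Rightarrow> nat \<Rightarrow> real \<Rightarrow> real \<Rightarrow> (nat \<Rightarrow> nat \<Rightarrow> real) \<Rightarrow> (nat \<Rightarrow> (nat \<Rightarrow> real) set) \<Rightarrow> bool"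
  where
  "is_DI_code \<theta> n N l1 l2 u E \<longleftrightarrow>
     (\<forall>j<N. u j \<in> space (torus n) \<and> E j \<in> sets (torus n)) \<and>
     (\<forall>j<N. measure (chan \<theta> n (u j)) (E j) \<ge> 1 - l1) \<and>
     (\<forall>j<N. \<forall>k<N. j \<noteq> k \<longrightarrow> measure (chan \<theta> n (u j)) (E k) \<le> l2)"

definition N_DI :: "real \<Rightarrow> nat \<Rightarrow> real \<Rightarrow> real \<Rightarrow> enat" where
  "N_DI \<theta> n l1 l2 = Sup {enat N | N. \<exists>u E. is_DI_code \<theta> n N l1 l2 u E}"

definition DI_rate :: "real \<Rightarrow> nat \<Rightarrow> real \<Rightarrow> real \<Rightarrow> ereal" where
  "DI_rate \<theta> n l1 l2 = (case N_DI \<theta> n l1 l2 of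
      enat N \<Rightarrow> ereal (log 2 (real N) / (real n * log 2 (real n)))
    | \<infinity> \<Rightarrow> \<infinity>)"

definition C_DI_dot :: "real \<Rightarrow> ereal" where
  "C_DI_dot \<theta> = (INF l1\<in>{0<..}. INF l2\<in>{0<..}. liminf (\<lambda>n. DI_rate \<theta> n l1 l2))"

end

theory Submission
  imports Defs "HOL-Real_Asymp.Real_Asymp"
begin

text \<open>
  Converse: moving every input coordinate by at most \<open>\<delta> < \<theta>\<close> changes the probability of any
  output event by at most \<open>n\<delta>/\<theta>\<close>. Indeed, rotating each noise coordinate within \<open>[0,\<theta>)\<close>
  by \<open>x\<^sub>i - y\<^sub>i\<close> preserves the noise distribution and maps the output at \<open>x\<close> to the output
  at \<open>y\<close>, except when the rotation wraps around, which has probability \<open>|x\<^sub>i - y\<^sub>i|/\<theta>\<close>.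
  Hence two codewords of a DI code never share a cell of the grid \<open>(1/K)\<int>\<^sup>n\<close> once
  \<open>n/(K\<theta>) < 1 - \<lambda>\<^sub>1 - \<lambda>\<^sub>2\<close>, so \<open>N \<le> K\<^sup>n\<close> with \<open>K\<close> linear in \<open>n\<close>,
  i.e. \<open>log N \<le> n log n + O(n)\<close>.

  Achievability: take a code of minimum Hamming distance \<open>D\<close> over the alphabet \<open>{0..<M}\<close> with at
  least \<open>M\<^sup>n / (2\<^sup>n M\<^sup>D)\<close> words (Gilbert--Varshamov), send the word \<open>w\<close> as the point \<open>w/M\<close> and
  decode with the product of the arcs \<open>[u\<^sub>i, u\<^sub>i + \<theta>]\<close>. A codeword is always decoded
  correctly, while in each of the at least \<open>D\<close> coordinates where two codewords differ the output
  misses the other arc with probability at least \<open>1/(M\<theta>)\<close>; so the error of the second kind is at most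
  \<open>(1 - 1/(M\<theta>))\<^sup>D \<le> exp (-D/(M\<theta>))\<close>. Taking \<open>M \<approx> n/ln\<^sup>2 n\<close> and \<open>D \<approx> n/ln n\<close>
  makes it vanish while \<open>log N \<ge> (n - D) log M - n = n log n (1 - o(1))\<close>.
\<close>

section \<open>Uniform noise and the channel\<close>

abbreviation Unif :: "real \<Rightarrow> real measure" where
  "Unif \<theta> \<equiv> uniform_measure lborel {0..\<theta>}"

abbreviation Unif_cube :: "real \<Rightarrow> nat \<Rightarrow> (nat \<Rightarrow> real) measure" where
  "Unif_cube \<theta> n \<equiv> PiM {..<n} (\<lambda>_. Unif \<theta>)"

definition torus_add :: "nat \<Rightarrow> (nat \<Rightarrow> real) \<Rightarrow> (nat \<Rightarrow> real) \<Rightarrow> nat \<Rightarrow> real" where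
  "torus_add n x = (\<lambda>t. \<lambda>i\<in>{..<n}. frac (x i + t i))"

lemma prob_space_Unif: "0 < \<theta> \<Longrightarrow> prob_space (Unif \<theta>)"
  by (intro prob_space_uniform_measure) auto

lemma prob_space_Unif_cube: "0 < \<theta> \<Longrightarrow> prob_space (Unif_cube \<theta> n)"
  by (intro prob_space_PiM prob_space_Unif)

lemma space_Unif_cube: "space (Unif_cube \<theta> n) = PiE {..<n} (\<lambda>_. UNIV)"
  by (simp add: space_PiM)

lemma space_torus: "space (torus n) = PiE {..<n} (\<lambda>_. {0..<1})"
  by (simp add: torus_def space_PiM space_restrict_space)

lemma measure_Unif_le_interval:
  assumes "0 < \<theta>" "X \<in> sets borel" "{0..\<theta>} \<inter> X \<subseteq> {a..b}" "a \<le> b"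
  shows "measure (Unif \<theta>) X \<le> (b - a) / \<theta>"
proof -
  have "measure lborel ({0..\<theta>} \<inter> X) \<le> measure lborel {a..b}"
    using assms by (intro measure_mono_fmeasurable) (auto simp: fmeasurable_def)
  then show ?thesis
    using assms by (simp add: divide_right_mono)
qed

lemma measure_Unif_ge_interval:
  assumes "0 < \<theta>" "X \<in> sets borel" "{a<..<b} \<subseteq> X" "0 \<le> a" "a \<le> b" "b \<le> \<theta>"
  shows "(b - a) / \<theta> \<le> measure (Unif \<theta>) X"
proof -
  have "measure lborel {a<..<b} \<le> measure lborel ({0..\<theta>} \<inter> X)"
    using assms by (intro measure_mono_fmeasurable fmeasurable_Int_fmeasurable)
      (auto simp: fmeasurable_def)
  then show ?thesis
    using assms by (simp add: divide_right_mono)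
qed

lemma emeasure_Unif_cube_PiE:
  assumes "0 < \<theta>" "\<And>i. i < n \<Longrightarrow> A i \<in> sets borel"
  shows "emeasure (Unif_cube \<theta> n) (PiE {..<n} A) = (\<Prod>i<n. emeasure (Unif \<theta>) (A i))"
proof -
  interpret product_prob_space "\<lambda>_. Unif \<theta>" "{..<n}"
    using assms(1) by (intro product_prob_spaceI prob_space_Unif)
  show ?thesis
    using assms by (intro emeasure_PiM) auto
qed

lemma measure_Unif_cube_PiE:
  assumes "0 < \<theta>" "\<And>i. i < n \<Longrightarrow> A i \<in> sets borel"
  shows "measure (Unif_cube \<theta> n) (PiE {..<n} A) = (\<Prod>i<n. measure (Unif \<theta>) (A i))"
proof -
  interpret prob_space "Unif \<theta>"
    using assms(1) by (rule prob_space_Unif)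
  have "emeasure (Unif_cube \<theta> n) (PiE {..<n} A) = ennreal (\<Prod>i<n. measure (Unif \<theta>) (A i))"
    using assms by (simp add: emeasure_Unif_cube_PiE emeasure_eq_measure prod_ennreal)
  then show ?thesis
    by (simp add: measure_def prod_nonneg)
qed

lemma measure_Unif_cube_component:
  assumes "0 < \<theta>" "i < n" "B \<in> sets borel"
  shows "measure (Unif_cube \<theta> n) ((\<lambda>t. t i) -` B \<inter> space (Unif_cube \<theta> n)) = measure (Unif \<theta>) B"
proof -
  have "measure (Unif \<theta>) B = measure (distr (Unif_cube \<theta> n) (Unif \<theta>) (\<lambda>t. t i)) B"
    using assms by (subst distr_PiM_component) (auto intro: prob_space_Unif)
  also have "\<dots> = measure (Unif_cube \<theta> n) ((\<lambda>t. t i) -` B \<inter> space (Unif_cube \<theta> n))"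
    using assms by (intro measure_distr) auto
  finally show ?thesis ..
qed

lemma borel_measurable_frac [measurable]: "(frac :: real \<Rightarrow> real) \<in> borel_measurable borel"
  unfolding frac_def by measurable

lemma measurable_torus_add: "torus_add n x \<in> measurable (Unif_cube \<theta> n) (torus n)"
  unfolding torus_add_def torus_def
  by (intro measurable_restrict measurable_restrict_space2) (auto simp: frac_lt_1)

lemma measure_chan:
  "E \<in> sets (torus n) \<Longrightarrow>
    measure (chan \<theta> n x) E = measure (Unif_cube \<theta> n) (torus_add n x -` E \<inter> space (Unif_cube \<theta> n))"
  unfolding chan_def torus_add_def[symmetric] using measurable_torus_add
  by (simp add: measure_distr)

section \<open>Continuity of the channel in the input\<close>

definition cshift :: "real \<Rightarrow> real \<Rightarrow> real \<Rightarrow> real" where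
  "cshift \<theta> c t = (if t + c < \<theta> then t + c else t + c - \<theta>)"

lemma borel_measurable_cshift [measurable]: "cshift \<theta> c \<in> borel_measurable borel"
  unfolding cshift_def[abs_def] by measurable

lemma emeasure_lborel_translate:
  assumes "B \<in> sets borel"
  shows "emeasure lborel {t. t + c \<in> B} = emeasure lborel (B :: real set)"
proof -
  have "emeasure lborel B = emeasure (distr lborel borel ((+) c)) B"
    by (simp add: lborel_distr_plus)
  also have "\<dots> = emeasure lborel ((+) c -` B \<inter> space lborel)"
    using assms by (intro emeasure_distr) auto
  also have "(+) c -` B \<inter> space lborel = {t. t + c \<in> B}"
    by (auto simp: add.commute)
  finally show ?thesis ..
qed

lemma emeasure_lborel_Icc_Int_eq_Ico_Int:
  "X \<in> sets borel \<Longrightarrow> emeasure lborel ({0..\<theta>} \<inter> X) = emeasure lborel ({0..<(\<theta>::real)} \<inter> X)"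
  using AE_lborel_singleton[of \<theta>] by (intro emeasure_eq_AE) auto

lemma emeasure_Unif_vimage_cshift:
  assumes "0 < \<theta>" "0 \<le> c" "c < \<theta>" "A \<in> sets borel"
  shows "emeasure (Unif \<theta>) (cshift \<theta> c -` A) = emeasure (Unif \<theta>) A"
proof -
  define S1 where "S1 = {t. t + c \<in> A \<inter> {c..<\<theta>}}"
  define S2 where "S2 = {t. t + (c - \<theta>) \<in> A \<inter> {0..<c}}"
  have S: "S1 \<in> sets borel" "S2 \<in> sets borel" "S1 \<inter> S2 = {}"
    using assms by (auto simp: S1_def S2_def)
  have "{0..<\<theta>} \<inter> cshift \<theta> c -` A = S1 \<union> S2"
    using assms by (auto simp: S1_def S2_def cshift_def add_diff_eq split: if_splits)
  then have "emeasure lborel ({0..<\<theta>} \<inter> cshift \<theta> c -` A) = emeasure lborel S1 + emeasure lborel S2"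
    using S by (simp add: plus_emeasure)
  also have "\<dots> = emeasure lborel (A \<inter> {c..<\<theta>}) + emeasure lborel (A \<inter> {0..<c})"
    unfolding S1_def S2_def using assms
    by (intro arg_cong2[where f = "(+)"] emeasure_lborel_translate) auto
  also have "\<dots> = emeasure lborel ({0..<\<theta>} \<inter> A)"
    using assms by (subst plus_emeasure) (auto intro!: arg_cong[where f = "emeasure lborel"])
  finally have "emeasure lborel ({0..<\<theta>} \<inter> cshift \<theta> c -` A) = emeasure lborel ({0..<\<theta>} \<inter> A)" .
  moreover have "cshift \<theta> c -` A \<in> sets borel"
    using assms(4) by (rule measurable_sets_borel[OF borel_measurable_cshift])
  ultimately show ?thesis
    using assms by (simp add: emeasure_lborel_Icc_Int_eq_Ico_Int)
qed

definition cshift_vec :: "real \<Rightarrow> nat \<Rightarrow> (nat \<Rightarrow> real) \<Rightarrow> (nat \<Rightarrow> real) \<Rightarrow> nat \<Rightarrow> real" where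
  "cshift_vec \<theta> n c = (\<lambda>t. \<lambda>i\<in>{..<n}. cshift \<theta> (c i) (t i))"

lemma measurable_cshift_vec: "cshift_vec \<theta> n c \<in> measurable (Unif_cube \<theta> n) (Unif_cube \<theta> n)"
  unfolding cshift_vec_def
  by (intro measurable_restrict measurable_compose[OF measurable_component_singleton]) auto

lemma distr_Unif_cube_cshift_vec:
  assumes "0 < \<theta>" "\<And>i. i < n \<Longrightarrow> 0 \<le> c i \<and> c i < \<theta>"
  shows "distr (Unif_cube \<theta> n) (Unif_cube \<theta> n) (cshift_vec \<theta> n c) = Unif_cube \<theta> n"
proof -
  interpret product_prob_space "\<lambda>_. Unif \<theta>" "{..<n}"
    using assms(1) by (intro product_prob_spaceI prob_space_Unif)
  show ?thesis
  proof (rule PiM_eqI)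
    fix A assume A: "\<And>i. i \<in> {..<n} \<Longrightarrow> A i \<in> sets (Unif \<theta>)"
    have "cshift_vec \<theta> n c -` PiE {..<n} A \<inter> space (Unif_cube \<theta> n)
        = PiE {..<n} (\<lambda>i. cshift \<theta> (c i) -` A i)"
      by (auto simp: cshift_vec_def space_Unif_cube PiE_iff extensional_def)
    then have "emeasure (distr (Unif_cube \<theta> n) (Unif_cube \<theta> n) (cshift_vec \<theta> n c)) (PiE {..<n} A)
        = (\<Prod>i<n. emeasure (Unif \<theta>) (cshift \<theta> (c i) -` A i))"
      using A assms(1)
      by (subst emeasure_distr) (auto intro!: measurable_cshift_vec sets_PiM_I_finite
          emeasure_Unif_cube_PiE measurable_sets_borel[OF borel_measurable_cshift])
    also have "\<dots> = (\<Prod>i<n. emeasure (Unif \<theta>) (A i))"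
      using A assms by (intro prod.cong refl emeasure_Unif_vimage_cshift) auto
    finally show "emeasure (distr (Unif_cube \<theta> n) (Unif_cube \<theta> n) (cshift_vec \<theta> n c)) (PiE {..<n} A)
        = (\<Prod>i\<in>{..<n}. emeasure (Unif \<theta>) (A i))"
      by simp
  qed auto
qed

lemma sets_borel_cshift_neq_translate: "{s. cshift \<theta> c s \<noteq> s + d} \<in> sets borel"
proof -
  have "{s. cshift \<theta> c s \<noteq> s + d} = (\<lambda>s. cshift \<theta> c s - (s + d)) -` (- {0})"
    by auto
  then show ?thesis
    by (simp add: measurable_sets_borel[of _ borel])
qed

lemma measure_Unif_cshift_neq_translate:
  assumes "0 < \<theta>" "\<bar>d\<bar> < \<theta>"
  shows "measure (Unif \<theta>) {s. cshift \<theta> (if 0 \<le> d then d else d + \<theta>) s \<noteq> s + d} \<le> \<bar>d\<bar> / \<theta>"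
    (is "measure _ ?X \<le> _")
proof (cases "0 \<le> d")
  case True
  have "{0..\<theta>} \<inter> ?X \<subseteq> {\<theta> - d..\<theta>}"
    using True by (auto simp: cshift_def)
  from measure_Unif_le_interval[OF assms(1) sets_borel_cshift_neq_translate this] show ?thesis
    using True assms by simp
next
  case False
  have "{0..\<theta>} \<inter> ?X \<subseteq> {0..-d}"
    using False by (auto simp: cshift_def)
  from measure_Unif_le_interval[OF assms(1) sets_borel_cshift_neq_translate this] show ?thesis
    using False by simp
qed

lemma (in prob_space) prob_le_coupling:
  assumes f: "f \<in> measurable M M" "distr M M f = M"
    and gh: "g \<in> measurable M N" "h \<in> measurable M N" "E \<in> sets N"
    and B: "B \<in> events" and agree: "\<And>\<omega>. \<omega> \<in> space M - B \<Longrightarrow> g \<omega> = h (f \<omega>)"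
  shows "prob (g -` E \<inter> space M) \<le> prob (h -` E \<inter> space M) + prob B"
proof -
  let ?H = "h -` E \<inter> space M"
  have H: "?H \<in> events"
    using gh by measurable
  have "g -` E \<inter> space M \<subseteq> (f -` ?H \<inter> space M) \<union> B"
    using agree measurable_space[OF f(1)] by auto
  then have "prob (g -` E \<inter> space M) \<le> prob (f -` ?H \<inter> space M) + prob B"
    using B H f(1) by (meson finite_measure_mono measure_Un_le order_trans measurable_sets sets.Un)
  also have "prob (f -` ?H \<inter> space M) = prob ?H"
    using measure_distr[OF f(1) H] f(2) by simp
  finally show ?thesis .
qed

lemma measure_Unif_cube_cshift_neq_translate:
  assumes "0 < \<theta>" "\<delta> < \<theta>" "\<And>i. i < n \<Longrightarrow> \<bar>d i\<bar> \<le> \<delta>"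
  shows "measure (Unif_cube \<theta> n) (\<Union>i<n. (\<lambda>t. t i) -`
      {s. cshift \<theta> (if 0 \<le> d i then d i else d i + \<theta>) s \<noteq> s + d i} \<inter> space (Unif_cube \<theta> n))
    \<le> real n * \<delta> / \<theta>"
proof -
  interpret P: prob_space "Unif_cube \<theta> n"
    using assms(1) by (rule prob_space_Unif_cube)
  define Bad where "Bad i = (\<lambda>t. t i) -`
    {s. cshift \<theta> (if 0 \<le> d i then d i else d i + \<theta>) s \<noteq> s + d i} \<inter> space (Unif_cube \<theta> n)" for i
  have "Bad i \<in> P.events" if "i < n" for i
    unfolding Bad_def using that sets_borel_cshift_neq_translate
    by (intro measurable_sets[OF measurable_component_singleton]) auto
  then have "P.prob (\<Union>i<n. Bad i) \<le> (\<Sum>i<n. P.prob (Bad i))"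
    by (intro P.finite_measure_subadditive_finite) auto
  also have "\<dots> \<le> (\<Sum>i<n. \<delta> / \<theta>)"
  proof (rule sum_mono)
    fix i assume "i \<in> {..<n}"
    then have "P.prob (Bad i) = measure (Unif \<theta>)
        {s. cshift \<theta> (if 0 \<le> d i then d i else d i + \<theta>) s \<noteq> s + d i}"
      unfolding Bad_def using assms(1)
      by (intro measure_Unif_cube_component sets_borel_cshift_neq_translate) auto
    also have "\<dots> \<le> \<bar>d i\<bar> / \<theta>"
      using assms(1,2) assms(3)[of i] \<open>i \<in> {..<n}\<close> by (intro measure_Unif_cshift_neq_translate) auto
    also have "\<dots> \<le> \<delta> / \<theta>"
      using assms \<open>i \<in> {..<n}\<close> by (simp add: divide_right_mono)
    finally show "P.prob (Bad i) \<le> \<delta> / \<theta>" .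
  qed
  finally show ?thesis
    by (simp add: Bad_def)
qed

lemma measure_chan_le_near:
  assumes "0 < \<theta>" "E \<in> sets (torus n)" "\<delta> < \<theta>" "\<And>i. i < n \<Longrightarrow> \<bar>x i - y i\<bar> \<le> \<delta>"
  shows "measure (chan \<theta> n x) E \<le> measure (chan \<theta> n y) E + real n * \<delta> / \<theta>"
proof -
  define d where "d i = x i - y i" for i
  define c where "c i = (if 0 \<le> d i then d i else d i + \<theta>)" for i
  let ?P = "Unif_cube \<theta> n"
  interpret P: prob_space ?P
    using assms(1) by (rule prob_space_Unif_cube)
  define Bad where "Bad = (\<Union>i<n. (\<lambda>t. t i) -` {s. cshift \<theta> (c i) s \<noteq> s + d i} \<inter> space ?P)"
  have "P.prob Bad \<le> real n * \<delta> / \<theta>"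
    unfolding Bad_def c_def d_def using assms(1,3,4) by (rule measure_Unif_cube_cshift_neq_translate)
  moreover have "P.prob (torus_add n x -` E \<inter> space ?P) \<le> P.prob (torus_add n y -` E \<inter> space ?P) + P.prob Bad"
  proof (rule P.prob_le_coupling[OF measurable_cshift_vec distr_Unif_cube_cshift_vec
        measurable_torus_add measurable_torus_add assms(2)])
    show "0 \<le> c i \<and> c i < \<theta>" if "i < n" for i
      using assms(3) assms(4)[OF that] by (auto simp: c_def d_def)
    show "Bad \<in> P.events"
      unfolding Bad_def using sets_borel_cshift_neq_translate
      by (intro sets.finite_UN measurable_sets[OF measurable_component_singleton]) auto
    show "torus_add n x t = torus_add n y (cshift_vec \<theta> n c t)" if "t \<in> space ?P - Bad" for t
      using that by (auto simp: torus_add_def cshift_vec_def Bad_def d_def algebra_simps)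
  qed (use assms(1) in auto)
  ultimately show ?thesis
    using assms(2) by (simp add: measure_chan)
qed

section \<open>Converse\<close>

lemma DI_code_codewords_separated:
  assumes "0 < \<theta>" "is_DI_code \<theta> n N l1 l2 u E" "j < N" "k < N" "j \<noteq> k" "\<delta> < \<theta>"
    and "real n * \<delta> / \<theta> < 1 - l1 - l2"
  shows "\<exists>i<n. \<delta> < \<bar>u j i - u k i\<bar>"
proof (rule ccontr)
  assume "\<not> ?thesis"
  then have "\<bar>u j i - u k i\<bar> \<le> \<delta>" if "i < n" for i
    using that by (meson not_less)
  then have "measure (chan \<theta> n (u j)) (E j) \<le> measure (chan \<theta> n (u k)) (E j) + real n * \<delta> / \<theta>"
    using assms by (intro measure_chan_le_near) (auto simp: is_DI_code_def)
  also have "\<dots> \<le> l2 + real n * \<delta> / \<theta>"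
    using assms by (simp add: is_DI_code_def)
  finally show False
    using assms by (fastforce simp: is_DI_code_def)
qed

lemma DI_code_size_le:
  assumes "0 < \<theta>" "is_DI_code \<theta> n N l1 l2 u E" "0 < K" "1 / real K < \<theta>"
    and "real n / (real K * \<theta>) < 1 - l1 - l2"
  shows "N \<le> K ^ n"
proof -
  define cell where "cell j = (\<lambda>i\<in>{..<n}. nat \<lfloor>real K * u j i\<rfloor>)" for j
  have u: "0 \<le> u j i" "u j i < 1" if "j < N" "i < n" for i j
    using assms(2) that by (auto simp: is_DI_code_def space_torus PiE_iff)
  have "inj_on cell {..<N}"
  proof (rule inj_onI, rule ccontr)
    fix j k assume jk: "j \<in> {..<N}" "k \<in> {..<N}" "cell j = cell k" "j \<noteq> k"
    have "\<bar>u j i - u k i\<bar> \<le> 1 / real K" if "i < n" for i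
    proof -
      have "\<lfloor>real K * u j i\<rfloor> = \<lfloor>real K * u k i\<rfloor>"
        using fun_cong[OF jk(3), of i] u[of j i] u[of k i] jk that by (simp add: cell_def nat_eq_iff)
      then have "\<bar>real K * u j i - real K * u k i\<bar> < 1"
        by linarith
      then have "real K * \<bar>u j i - u k i\<bar> \<le> 1"
        by (simp add: abs_mult flip: right_diff_distrib)
      then show ?thesis
        using assms(3) by (simp add: field_simps)
    qed
    then show False
      using DI_code_codewords_separated[OF assms(1,2), of j k "1 / real K"] jk assms by fastforce
  qed
  moreover have "cell ` {..<N} \<subseteq> PiE {..<n} (\<lambda>_. {..<K})"
  proof (rule image_subsetI)
    fix j assume "j \<in> {..<N}"
    then have "nat \<lfloor>real K * u j i\<rfloor> < K" if "i < n" for i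
      using u[of j i] that assms(3) by (simp add: nat_less_iff floor_less_iff)
    then show "cell j \<in> PiE {..<n} (\<lambda>_. {..<K})"
      unfolding cell_def restrict_PiE_iff by simp
  qed
  ultimately have "card {..<N} \<le> card (PiE {..<n} (\<lambda>_. {..<K}))"
    by (intro card_inj_on_le) (auto intro: finite_PiE)
  then show ?thesis
    by (simp add: card_PiE)
qed

lemma N_DI_ge: "is_DI_code \<theta> n N l1 l2 u E \<Longrightarrow> enat N \<le> N_DI \<theta> n l1 l2"
  unfolding N_DI_def by (intro Sup_upper) blast

lemma N_DI_le: "(\<And>N u E. is_DI_code \<theta> n N l1 l2 u E \<Longrightarrow> N \<le> B) \<Longrightarrow> N_DI \<theta> n l1 l2 \<le> enat B"
  unfolding N_DI_def by (intro Sup_least) auto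

lemma DI_rate_ge:
  assumes "is_DI_code \<theta> n N l1 l2 u E" "1 \<le> N"
  shows "ereal (log 2 (real N) / (real n * log 2 (real n))) \<le> DI_rate \<theta> n l1 l2"
proof (cases "N_DI \<theta> n l1 l2")
  case (enat N')
  then have "log 2 (real N) \<le> log 2 (real N')"
    using N_DI_ge[OF assms(1)] assms(2) by simp
  moreover have "0 \<le> real n * log 2 (real n)"
    by (cases n) auto
  ultimately show ?thesis
    by (simp add: DI_rate_def enat divide_right_mono)
qed (simp add: DI_rate_def)

lemma DI_rate_le:
  assumes "N_DI \<theta> n l1 l2 \<le> enat B" "1 \<le> B"
  shows "DI_rate \<theta> n l1 l2 \<le> ereal (log 2 (real B) / (real n * log 2 (real n)))"
proof -
  obtain N' where N': "N_DI \<theta> n l1 l2 = enat N'" "N' \<le> B"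
    using assms(1) by (cases "N_DI \<theta> n l1 l2") auto
  \<comment> \<open>junk value \<open>log 2 0 = 0\<close>: an empty optimal code is harmless\<close>
  have "log 2 (real N') \<le> log 2 (real B)"
  proof (cases "N' = 0")
    case False
    then show ?thesis
      using N' by simp
  qed (use assms(2) in \<open>simp add: log_def\<close>)
  moreover have "0 \<le> real n * log 2 (real n)"
    by (cases n) auto
  ultimately show ?thesis
    by (simp add: DI_rate_def N' divide_right_mono)
qed

lemma DI_rate_le_grid:
  assumes "0 < \<theta>" "0 < K" "1 / real K < \<theta>" "real n / (real K * \<theta>) < 1 - l1 - l2" "2 \<le> n"
  shows "DI_rate \<theta> n l1 l2 \<le> ereal (log 2 (real K) / log 2 (real n))"
proof -
  have "N_DI \<theta> n l1 l2 \<le> enat (K ^ n)"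
    using assms by (intro N_DI_le DI_code_size_le)
  then have "DI_rate \<theta> n l1 l2 \<le> ereal (log 2 (real (K ^ n)) / (real n * log 2 (real n)))"
    using assms(2) by (intro DI_rate_le) auto
  also have "log 2 (real (K ^ n)) / (real n * log 2 (real n)) = log 2 (real K) / log 2 (real n)"
    using assms(2,5) by (simp add: log_nat_power)
  finally show ?thesis .
qed

lemma DI_rate_le_log_linear:
  assumes "0 < \<theta>" "0 \<le> l1 + l2" "l1 + l2 < 1" "2 \<le> n"
  shows "DI_rate \<theta> n l1 l2 \<le> ereal (log 2 (2 / (\<theta> * (1 - l1 - l2)) * real n + 1) / log 2 (real n))"
proof -
  define C where "C = 2 / (\<theta> * (1 - l1 - l2))"
  define K where "K = nat \<lceil>C * real n\<rceil>"
  have C: "C * \<theta> = 2 / (1 - l1 - l2)"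
    using assms by (simp add: C_def)
  then have "2 \<le> C * \<theta>"
    using assms by (simp add: le_divide_eq)
  have C_pos: "0 < C"
    using assms by (simp add: C_def)
  then have "0 < C * real n"
    using assms by simp
  then have K: "C * real n \<le> real K" "real K \<le> C * real n + 1"
    unfolding K_def by linarith+
  have "2 * real n \<le> C * \<theta> * real n"
    using \<open>2 \<le> C * \<theta>\<close> by (intro mult_right_mono) auto
  also have "\<dots> \<le> real K * \<theta>"
    using K assms(1) by (simp add: mult.commute mult.left_commute)
  finally have "1 < real K * \<theta>"
    using assms(4) by simp
  then have K_pos: "0 < K"
    by (auto intro: Nat.gr0I)
  have "real n / (real K * \<theta>) \<le> real n / (C * real n * \<theta>)"
    using K C_pos K_pos assms by (intro divide_left_mono mult_right_mono mult_pos_pos) auto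
  also have "\<dots> = 1 / (C * \<theta>)"
    using assms by simp
  also have "\<dots> = (1 - l1 - l2) / 2"
    unfolding C by simp
  also have "\<dots> < 1 - l1 - l2"
    using assms by simp
  finally have "DI_rate \<theta> n l1 l2 \<le> ereal (log 2 (real K) / log 2 (real n))"
    using \<open>1 < real K * \<theta>\<close> K_pos assms(1,4)
    by (intro DI_rate_le_grid) (auto simp: divide_less_eq mult.commute)
  also have "log 2 (real K) / log 2 (real n) \<le> log 2 (C * real n + 1) / log 2 (real n)"
    using K K_pos assms(4) by (intro divide_right_mono) auto
  finally show ?thesis
    by (simp add: C_def)
qed

section \<open>Decoding with arcs\<close>

definition arc :: "real \<Rightarrow> real \<Rightarrow> real set" where
  "arc \<theta> v = {y. 0 \<le> y \<and> y < 1 \<and> frac (y - v) \<le> \<theta>}"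

lemma sets_torus_PiE_arc: "PiE {..<n} (\<lambda>i. arc \<theta> (v i)) \<in> sets (torus n)"
proof -
  have "arc \<theta> a \<in> sets (restrict_space borel {0..<1})" for a
  proof -
    have "arc \<theta> a = {0..<1} \<inter> (\<lambda>y. frac (y - a)) -` {..\<theta>}"
      by (auto simp: arc_def)
    then show ?thesis
      by (simp add: sets_restrict_space_iff)
  qed
  then show ?thesis
    unfolding torus_def by (intro sets_PiM_I_finite) auto
qed

lemma torus_add_vimage_PiE:
  "torus_add n x -` PiE {..<n} B \<inter> space (Unif_cube \<theta> n) = PiE {..<n} (\<lambda>i. {s. frac (x i + s) \<in> B i})"
proof (intro equalityI subsetI)
  fix t assume t: "t \<in> torus_add n x -` PiE {..<n} B \<inter> space (Unif_cube \<theta> n)"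
  then have "restrict (\<lambda>i. frac (x i + t i)) {..<n} \<in> PiE {..<n} B"
    by (simp add: torus_add_def)
  then have "\<forall>i<n. frac (x i + t i) \<in> B i"
    by (simp add: restrict_PiE_iff Pi_iff)
  moreover have "t \<in> extensional {..<n}"
    using t by (simp add: space_Unif_cube PiE_def)
  ultimately show "t \<in> PiE {..<n} (\<lambda>i. {s. frac (x i + s) \<in> B i})"
    by (simp add: PiE_iff)
next
  fix t assume t: "t \<in> PiE {..<n} (\<lambda>i. {s. frac (x i + s) \<in> B i})"
  then have "torus_add n x t \<in> PiE {..<n} B"
    by (simp add: torus_add_def restrict_PiE_iff PiE_iff)
  moreover have "t \<in> space (Unif_cube \<theta> n)"
    using t by (simp add: space_Unif_cube PiE_def)
  ultimately show "t \<in> torus_add n x -` PiE {..<n} B \<inter> space (Unif_cube \<theta> n)"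
    by simp
qed

lemma measure_chan_PiE_arc:
  assumes "0 < \<theta>"
  shows "measure (chan \<theta> n x) (PiE {..<n} (\<lambda>i. arc \<theta> (v i)))
    = (\<Prod>i<n. measure (Unif \<theta>) {s. frac (x i - v i + s) \<le> \<theta>})"
proof -
  have "frac (frac (x i + s) - v i) = frac (x i - v i + s)" for i s
    by (metis add.commute add_diff_eq diff_conv_add_uminus frac_add_simps(1))
  then have "{s. frac (x i + s) \<in> arc \<theta> (v i)} = {s. frac (x i - v i + s) \<le> \<theta>}" for i
    by (simp add: arc_def frac_lt_1)
  then show ?thesis
    using assms sets_torus_PiE_arc
    by (simp add: measure_chan torus_add_vimage_PiE measure_Unif_cube_PiE)
qed

lemma measure_Unif_frac_le:
  assumes "0 < \<theta>" "\<theta> < 1"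
  shows "measure (Unif \<theta>) {s. frac s \<le> \<theta>} = 1"
proof -
  have "{0..\<theta>} \<inter> {s. frac s \<le> \<theta>} = {0..\<theta>}"
    using assms by auto
  then show ?thesis
    using assms by simp
qed

lemma measure_chan_PiE_arc_self:
  assumes "0 < \<theta>" "\<theta> < 1"
  shows "measure (chan \<theta> n x) (PiE {..<n} (\<lambda>i. arc \<theta> (x i))) = 1"
proof -
  have "measure (chan \<theta> n x) (PiE {..<n} (\<lambda>i. arc \<theta> (x i)))
      = (\<Prod>i<n. measure (Unif \<theta>) {s. frac (x i - x i + s) \<le> \<theta>})"
    using assms(1) by (rule measure_chan_PiE_arc)
  also have "\<dots> = 1"
    by (simp only: diff_self add_0 measure_Unif_frac_le[OF assms] prod.neutral_const)
  finally show ?thesis .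
qed

lemma measure_Unif_frac_shift_le:
  assumes "0 < \<theta>" "0 \<le> \<delta>" "\<delta> \<le> \<theta>" "\<delta> \<le> 1 - \<theta>" "\<delta> \<le> frac e" "frac e \<le> 1 - \<delta>"
  shows "measure (Unif \<theta>) {s. frac (e + s) \<le> \<theta>} \<le> 1 - \<delta> / \<theta>"
proof -
  interpret prob_space "Unif \<theta>"
    using assms(1) by (rule prob_space_Unif)
  let ?S = "{s. frac (e + s) \<le> \<theta>}"
  define \<alpha> where "\<alpha> = (if frac e \<le> \<theta> then \<theta> - frac e else 0)"
  \<comment> \<open>on this interval \<open>frac e + s\<close> runs through \<open>(\<theta>, 1)\<close>, the complement of the arc\<close>
  have "{\<alpha><..<\<alpha> + \<delta>} \<subseteq> UNIV - ?S"
  proof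
    fix s assume "s \<in> {\<alpha><..<\<alpha> + \<delta>}"
    then have range: "\<theta> < frac e + s" "frac e + s < 1"
      using assms by (auto simp: \<alpha>_def split: if_splits)
    have "e + s - (frac e + s) \<in> \<int>"
      by (simp add: frac_def)
    then have "frac (e + s) = frac e + s"
      using range assms(1) by (simp add: frac_unique_iff)
    then show "s \<in> UNIV - ?S"
      using range by simp
  qed
  then have "\<delta> / \<theta> \<le> prob (UNIV - ?S)"
    using measure_Unif_ge_interval[of \<theta> "UNIV - ?S" \<alpha> "\<alpha> + \<delta>"] assms
    by (auto simp: \<alpha>_def)
  also have "\<dots> = 1 - prob ?S"
    using prob_compl[of ?S] by simp
  finally show ?thesis
    by simp
qed

lemma frac_grid_diff_bounds:
  assumes "a < M" "b < M" "a \<noteq> b"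
  shows "1 / real M \<le> frac (real a / M - real b / M)" "frac (real a / M - real b / M) \<le> 1 - 1 / real M"
proof -
  have M: "0 < real M"
    using assms by simp
  obtain k where k: "frac (real a / M - real b / M) = k / M" "1 \<le> k" "k \<le> real M - 1"
  proof (cases "b < a")
    case True
    then have "0 \<le> (real a - real b) / M" "(real a - real b) / M < 1"
      using assms M by (auto simp: divide_less_eq)
    then show ?thesis
      using True assms by (intro that[of "real a - real b"]) (auto simp: frac_eq diff_divide_distrib)
  next
    case False
    have "frac (real a / M - real b / M) = frac ((real a - real b) / M + 1)"
      by (simp add: diff_divide_distrib frac_1_eq)
    also have "(real a - real b) / M + 1 = (real M + real a - real b) / M"
      using M by (simp add: field_simps)
    also have "frac \<dots> = (real M + real a - real b) / M"
      using False assms M by (subst frac_eq) (auto simp: divide_less_eq)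
    finally show ?thesis
      using False assms by (intro that) auto
  qed
  have "1 / real M \<le> k / M" "k / M \<le> (real M - 1) / M"
    using k M by (auto intro: divide_right_mono)
  moreover have "(real M - 1) / M = 1 - 1 / real M"
    using M by (simp add: diff_divide_distrib)
  ultimately show "1 / real M \<le> frac (real a / M - real b / M)" "frac (real a / M - real b / M) \<le> 1 - 1 / real M"
    using k by auto
qed

section \<open>Codes with large Hamming distance\<close>

definition hamming_dist :: "nat \<Rightarrow> (nat \<Rightarrow> 'a) \<Rightarrow> (nat \<Rightarrow> 'a) \<Rightarrow> nat" where
  "hamming_dist n w w' = card {i\<in>{..<n}. w i \<noteq> w' i}"

lemma hamming_dist_commute: "hamming_dist n w w' = hamming_dist n w' w"
  unfolding hamming_dist_def by metis

lemma inj_on_diff_positions: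
  fixes n :: nat and c :: "nat \<Rightarrow> 'a"
  defines "diff w \<equiv> {i\<in>{..<n}. w i \<noteq> c i}"
  shows "inj_on (\<lambda>w. (diff w, restrict w (diff w))) (extensional {..<n})"
proof (rule inj_onI)
  fix w1 w2
  assume w: "w1 \<in> extensional {..<n}" "w2 \<in> extensional {..<n}"
    and eq: "(diff w1, restrict w1 (diff w1)) = (diff w2, restrict w2 (diff w2))"
  have same: "diff w1 = diff w2" and restr: "restrict w1 (diff w1) = restrict w2 (diff w2)"
    using eq by (metis prod.inject)+
  show "w1 = w2"
  proof (rule extensionalityI[OF w])
    fix i assume i: "i \<in> {..<n}"
    show "w1 i = w2 i"
    proof (cases "i \<in> diff w1")
      case True
      then show ?thesis
        using fun_cong[OF restr, of i] same by simp
    next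
      case False
      then have "i \<notin> diff w2"
        using same by simp
      with False i show ?thesis
        by (simp add: diff_def)
    qed
  qed
qed

lemma card_hamming_ball_le:
  assumes "finite A" "A \<noteq> {}"
  shows "card {w \<in> PiE {..<n} (\<lambda>_. A). hamming_dist n w c < D} \<le> 2 ^ n * card A ^ D"
proof -
  define Ball where "Ball = {w \<in> PiE {..<n} (\<lambda>_. A). hamming_dist n w c < D}"
  define diff where "diff w = {i\<in>{..<n}. w i \<noteq> c i}" for w
  define S where "S = {Q. Q \<subseteq> {..<n} \<and> card Q < D}"
  have fin_S: "finite S" and fin_Q: "\<And>Q. Q \<in> S \<Longrightarrow> finite Q"
    by (auto simp: S_def intro: finite_subset[of _ "Pow {..<n}"] finite_subset[of _ "{..<n}"])
  have "inj_on (\<lambda>w. (diff w, restrict w (diff w))) Ball"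
    unfolding diff_def
    by (rule inj_on_subset[OF inj_on_diff_positions]) (auto simp: Ball_def PiE_def)
  moreover have "(\<lambda>w. (diff w, restrict w (diff w))) ` Ball \<subseteq> Sigma S (\<lambda>Q. PiE Q (\<lambda>_. A))"
  proof (rule image_subsetI)
    fix w assume w: "w \<in> Ball"
    have "hamming_dist n w c = card (diff w)"
      by (simp add: hamming_dist_def diff_def)
    then have "diff w \<in> S"
      using w by (simp add: Ball_def S_def diff_def subset_eq)
    moreover have "\<forall>i\<in>diff w. w i \<in> A"
      using w unfolding Ball_def diff_def by (blast intro: PiE_mem)
    ultimately show "(diff w, restrict w (diff w)) \<in> Sigma S (\<lambda>Q. PiE Q (\<lambda>_. A))"
      by (simp add: restrict_PiE_iff)
  qed
  ultimately have "card Ball \<le> card (Sigma S (\<lambda>Q. PiE Q (\<lambda>_. A)))"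
    using fin_S fin_Q assms(1) by (intro card_inj_on_le finite_SigmaI finite_PiE) auto
  also have "\<dots> = (\<Sum>Q\<in>S. card A ^ card Q)"
    using fin_S fin_Q assms(1) by (simp add: card_SigmaI finite_PiE card_PiE)
  also have "\<dots> \<le> (\<Sum>Q\<in>S. card A ^ D)"
    using assms by (intro sum_mono power_increasing) (auto simp: S_def Suc_le_eq card_gt_0_iff)
  also have "\<dots> \<le> 2 ^ n * card A ^ D"
  proof -
    have "card S \<le> card (Pow {..<n})"
      by (intro card_mono) (auto simp: S_def)
    then show ?thesis
      by (simp add: card_Pow)
  qed
  finally show ?thesis
    by (simp add: Ball_def)
qed

lemma maximal_hamming_code_covers:
  assumes "C \<subseteq> W" "finite C" "1 \<le> D" "pairwise (\<lambda>w w'. D \<le> hamming_dist n w w') C"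
    and max: "\<And>C'. C' \<subseteq> W \<Longrightarrow> pairwise (\<lambda>w w'. D \<le> hamming_dist n w w') C' \<Longrightarrow> card C' \<le> card C"
  shows "W \<subseteq> (\<Union>c\<in>C. {w \<in> W. hamming_dist n w c < D})"
proof
  fix w assume w: "w \<in> W"
  show "w \<in> (\<Union>c\<in>C. {w \<in> W. hamming_dist n w c < D})"
  proof (rule ccontr)
    assume "\<not> ?thesis"
    then have far: "\<forall>c\<in>C. D \<le> hamming_dist n w c"
      using w by auto
    then have "w \<notin> C"
      using assms(3) by (fastforce simp: hamming_dist_def)
    moreover have "card (insert w C) \<le> card C"
      using assms(1,4) w far by (intro max) (auto simp: pairwise_insert hamming_dist_commute)
    ultimately show False
      using assms(2) by simp
  qed
qed

lemma exists_hamming_code: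
  assumes "finite A" "A \<noteq> {}" "1 \<le> D"
  shows "\<exists>C \<subseteq> PiE {..<n} (\<lambda>_. A). pairwise (\<lambda>w w'. D \<le> hamming_dist n w w') C \<and>
           card A ^ n \<le> card C * (2 ^ n * card A ^ D)"
proof -
  define W where "W = PiE {..<n} (\<lambda>_. A)"
  define code where "code C \<longleftrightarrow> C \<subseteq> W \<and> pairwise (\<lambda>w w'. D \<le> hamming_dist n w w') C" for C
  have fin_W: "finite W"
    using assms(1) by (simp add: W_def finite_PiE)
  have "code {}"
    by (simp add: code_def)
  moreover have "\<forall>C. code C \<longrightarrow> card C < Suc (card W)"
    using fin_W by (auto simp: code_def less_Suc_eq_le intro: card_mono)
  ultimately obtain C where C: "code C" and max: "\<And>C'. code C' \<Longrightarrow> card C' \<le> card C"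
    using Lattices_Big.ex_has_greatest_nat[of code "{}" card "Suc (card W)"] by blast
  have fin_C: "finite C"
    using C fin_W by (auto simp: code_def intro: finite_subset)
  have "W \<subseteq> (\<Union>c\<in>C. {w \<in> W. hamming_dist n w c < D})"
    using C max fin_C assms(3) by (intro maximal_hamming_code_covers) (auto simp: code_def)
  then have "card W \<le> card (\<Union>c\<in>C. {w \<in> W. hamming_dist n w c < D})"
    using fin_W by (intro card_mono) (auto intro: finite_subset)
  then have "card A ^ n \<le> card (\<Union>c\<in>C. {w \<in> W. hamming_dist n w c < D})"
    by (simp add: W_def card_PiE)
  also have "\<dots> \<le> (\<Sum>c\<in>C. card {w \<in> W. hamming_dist n w c < D})"
    using fin_C by (rule card_UN_le)
  also have "\<dots> \<le> card C * (2 ^ n * card A ^ D)"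
    using sum_mono[of C _ "\<lambda>_. 2 ^ n * card A ^ D"] card_hamming_ball_le[OF assms(1,2)]
    by (simp add: W_def)
  finally show ?thesis
    using C by (auto simp: code_def W_def)
qed

section \<open>Achievability\<close>

definition grid_point :: "nat \<Rightarrow> nat \<Rightarrow> (nat \<Rightarrow> nat) \<Rightarrow> nat \<Rightarrow> real" where
  "grid_point M n w = (\<lambda>i\<in>{..<n}. real (w i) / real M)"

lemma grid_point_in_torus:
  assumes "w \<in> PiE {..<n} (\<lambda>_. {..<M})"
  shows "grid_point M n w \<in> space (torus n)"
proof -
  have "real (w i) / real M < 1" if "i < n" for i
    using PiE_mem[OF assms, of i] that by simp
  then show ?thesis
    unfolding space_torus grid_point_def restrict_PiE_iff by simp
qed

lemma measure_chan_grid_point_arc_le: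
  assumes "0 < \<theta>" "0 < M" "1 / real M \<le> \<theta>" "1 / real M \<le> 1 - \<theta>"
    and w: "w \<in> PiE {..<n} (\<lambda>_. {..<M})" "w' \<in> PiE {..<n} (\<lambda>_. {..<M})"
    and "D \<le> hamming_dist n w w'"
  shows "measure (chan \<theta> n (grid_point M n w')) (PiE {..<n} (\<lambda>i. arc \<theta> (grid_point M n w i)))
    \<le> (1 - 1 / (real M * \<theta>)) ^ D"
proof -
  interpret prob_space "Unif \<theta>"
    using assms(1) by (rule prob_space_Unif)
  define q where "q = 1 - 1 / (real M * \<theta>)"
  have q: "0 \<le> q" "q \<le> 1"
    using assms(1-3) by (auto simp: q_def field_simps)
  define f where "f i = prob {s. frac (grid_point M n w' i - grid_point M n w i + s) \<le> \<theta>}" for i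
  have f: "f i \<le> (if w i \<noteq> w' i then q else 1)" if "i < n" for i
  proof (cases "w i \<noteq> w' i")
    case True
    have "w i < M" "w' i < M"
      using w that by (auto simp: PiE_iff)
    then have "f i \<le> 1 - (1 / real M) / \<theta>"
      unfolding f_def grid_point_def using True that assms(1-4) frac_grid_diff_bounds[of "w' i" M "w i"]
      by (intro measure_Unif_frac_shift_le) auto
    then show ?thesis
      using True by (simp add: q_def)
  qed (simp add: f_def)
  have "measure (chan \<theta> n (grid_point M n w')) (PiE {..<n} (\<lambda>i. arc \<theta> (grid_point M n w i)))
      = (\<Prod>i<n. f i)"
    unfolding f_def using assms(1) by (rule measure_chan_PiE_arc)
  also have "\<dots> \<le> (\<Prod>i<n. if w i \<noteq> w' i then q else 1)"
    using f by (intro prod_mono) (simp add: f_def)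
  also have "\<dots> = q ^ hamming_dist n w w'"
    by (simp add: prod.If_cases hamming_dist_def Int_def conj_commute)
  also have "\<dots> \<le> q ^ D"
    using power_decreasing[OF assms(7) q] .
  finally show ?thesis
    by (simp add: q_def)
qed

lemma exists_DI_code_grid:
  assumes "0 < \<theta>" "\<theta> < 1" "0 \<le> l1" "0 < M" "1 / real M \<le> \<theta>" "1 / real M \<le> 1 - \<theta>" "1 \<le> D"
    and "(1 - 1 / (real M * \<theta>)) ^ D \<le> l2"
  shows "\<exists>N u E. is_DI_code \<theta> n N l1 l2 u E \<and> M ^ n \<le> N * (2 ^ n * M ^ D)"
proof -
  obtain C where C: "C \<subseteq> PiE {..<n} (\<lambda>_. {..<M})" "pairwise (\<lambda>w w'. D \<le> hamming_dist n w w') C"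
    and size: "M ^ n \<le> card C * (2 ^ n * M ^ D)"
    using exists_hamming_code[of "{..<M}" D n] assms(4,7) by auto
  have "finite C"
    using C(1) by (rule finite_subset) (simp add: finite_PiE)
  then obtain h where h: "bij_betw h {0..<card C} C"
    using ex_bij_betw_nat_finite by blast
  define u where "u j = grid_point M n (h j)" for j
  define E where "E j = PiE {..<n} (\<lambda>i. arc \<theta> (u j i))" for j
  have h_C: "h j \<in> PiE {..<n} (\<lambda>_. {..<M})" if "j < card C" for j
    using bij_betw_apply[OF h] C(1) that by auto
  have "is_DI_code \<theta> n (card C) l1 l2 u E"
    unfolding is_DI_code_def
  proof (intro conjI allI impI)
    fix j assume j: "j < card C"
    show "u j \<in> space (torus n)"
      unfolding u_def using h_C[OF j] by (rule grid_point_in_torus)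
    show "E j \<in> sets (torus n)"
      unfolding E_def by (rule sets_torus_PiE_arc)
    show "1 - l1 \<le> measure (chan \<theta> n (u j)) (E j)"
      using measure_chan_PiE_arc_self[OF assms(1,2)] assms(3) by (simp add: E_def)
  next
    fix j k assume jk: "j < card C" "k < card C" "j \<noteq> k"
    then have "h k \<in> C" "h j \<in> C" "h k \<noteq> h j"
      using h jk bij_betw_apply[OF h] by (auto dest: bij_betw_imp_inj_on simp: inj_on_def)
    then have "D \<le> hamming_dist n (h k) (h j)"
      using C(2) by (auto simp: pairwise_def)
    then have "measure (chan \<theta> n (u j)) (E k) \<le> (1 - 1 / (real M * \<theta>)) ^ D"
      unfolding E_def u_def using assms(1,4-6) h_C jk
      by (intro measure_chan_grid_point_arc_le) auto
    then show "measure (chan \<theta> n (u j)) (E k) \<le> l2"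
      using assms(8) by linarith
  qed
  then show ?thesis
    using size by blast
qed

lemma power_one_minus_le:
  assumes "y \<le> 1" "0 < l" "ln (1 / l) \<le> real D * y"
  shows "(1 - y) ^ D \<le> l"
proof -
  have "(1 - y) ^ D \<le> exp (- y) ^ D"
    using assms(1) exp_ge_add_one_self[of "- y"] by (intro power_mono) auto
  also have "\<dots> = exp (- (real D * y))"
    by (simp flip: exp_of_nat_mult)
  also have "\<dots> \<le> exp (- ln (1 / l))"
    using assms(3) by simp
  also have "\<dots> = l"
    using assms(2) by (simp add: ln_div)
  finally show ?thesis .
qed

lemma DI_rate_ge_grid:
  assumes "0 < \<theta>" "\<theta> < 1" "0 \<le> l1" "0 < M" "1 / real M \<le> \<theta>" "1 / real M \<le> 1 - \<theta>" "1 \<le> D"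
    and "0 < l2" "ln (1 / l2) \<le> real D / (real M * \<theta>)"
  shows "ereal (((real n - real D) * log 2 (real M) - real n) / (real n * log 2 (real n)))
    \<le> DI_rate \<theta> n l1 l2"
proof -
  have "1 / (real M * \<theta>) \<le> 1"
    using assms(1,4,5) by (simp add: divide_le_eq mult.commute)
  then have "(1 - 1 / (real M * \<theta>)) ^ D \<le> l2"
    using assms(8,9) by (intro power_one_minus_le) auto
  then obtain N u E where code: "is_DI_code \<theta> n N l1 l2 u E" and size: "M ^ n \<le> N * (2 ^ n * M ^ D)"
    using exists_DI_code_grid[OF assms(1-7)] by blast
  have "0 < N"
    using size assms(4) by (auto intro: Nat.gr0I)
  have "real (M ^ n) \<le> real (N * (2 ^ n * M ^ D))"
    using size by (simp only: of_nat_le_iff)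
  then have "log 2 (real M ^ n) \<le> log 2 (real N * (2 ^ n * real M ^ D))"
    using assms(4) \<open>0 < N\<close> by simp
  then have "(real n - real D) * log 2 (real M) - real n \<le> log 2 (real N)"
    using assms(4) \<open>0 < N\<close> by (simp add: log_mult log_nat_power algebra_simps)
  moreover have "0 \<le> real n * log 2 (real n)"
    by (cases n) auto
  ultimately have "((real n - real D) * log 2 (real M) - real n) / (real n * log 2 (real n))
      \<le> log 2 (real N) / (real n * log 2 (real n))"
    by (rule divide_right_mono)
  also have "ereal \<dots> \<le> DI_rate \<theta> n l1 l2"
    using code \<open>0 < N\<close> by (intro DI_rate_ge) auto
  finally show ?thesis
    by simp
qed

lemma DI_rate_ge_real_params:
  assumes "0 < \<theta>" "\<theta> < 1" "0 \<le> l1" "0 < l2"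
    and a: "max (1 / \<theta>) (1 / (1 - \<theta>)) + 2 \<le> a"
    and b: "2 \<le> b" "b \<le> real n"
    and l2: "ln (1 / l2) \<le> (b - 1) / (a * \<theta>)"
  shows "ereal (((real n - b) * log 2 (a - 1) - real n) / (real n * log 2 (real n))) \<le> DI_rate \<theta> n l1 l2"
proof -
  define M where "M = nat \<lfloor>a\<rfloor>"
  define D where "D = nat \<lfloor>b\<rfloor>"
  have "0 < 1 / \<theta>" "0 < 1 / (1 - \<theta>)"
    using assms(1,2) by auto
  then have a_ge: "1 / \<theta> + 2 \<le> a" "1 / (1 - \<theta>) + 2 \<le> a"
    using a by linarith+
  have M: "a - 1 \<le> real M" "real M \<le> a" and D: "b - 1 \<le> real D" "real D \<le> b"
    using a_ge b \<open>0 < 1 / \<theta>\<close> unfolding M_def D_def by linarith+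
  have M_pos: "0 < M"
    using M a_ge \<open>0 < 1 / \<theta>\<close> by linarith
  have "1 / \<theta> \<le> real M" "1 / (1 - \<theta>) \<le> real M"
    using M a_ge by linarith+
  then have M_\<theta>: "1 / real M \<le> \<theta>" "1 / real M \<le> 1 - \<theta>"
    using assms(1,2) M_pos by (auto simp: field_simps)
  have "1 \<le> D"
    using D b by linarith
  have "(b - 1) / (a * \<theta>) \<le> real D / (real M * \<theta>)"
    using D M M_pos assms(1) b by (intro frac_le mult_right_mono) auto
  then have rate: "ereal (((real n - real D) * log 2 (real M) - real n) / (real n * log 2 (real n)))
      \<le> DI_rate \<theta> n l1 l2"
    using assms(1-4) l2 M_pos M_\<theta> \<open>1 \<le> D\<close> by (intro DI_rate_ge_grid) auto
  have "1 \<le> a - 1"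
    using a_ge \<open>0 < 1 / \<theta>\<close> by linarith
  then have "0 \<le> log 2 (a - 1)" "log 2 (a - 1) \<le> log 2 (real M)"
    using M by auto
  then have "(real n - b) * log 2 (a - 1) \<le> (real n - real D) * log 2 (real M)"
    using D b by (intro mult_mono) auto
  moreover have "0 \<le> real n * log 2 (real n)"
    by (cases n) auto
  ultimately have "((real n - b) * log 2 (a - 1) - real n) / (real n * log 2 (real n))
      \<le> ((real n - real D) * log 2 (real M) - real n) / (real n * log 2 (real n))"
    by (intro divide_right_mono) auto
  with rate show ?thesis
    by (meson ereal_less_eq(3) order_trans)
qed

section \<open>Asymptotics\<close>

text \<open>The rate guaranteed by the grid code with \<open>M \<approx> n/ln\<^sup>2 n\<close> letters and minimum distance
  \<open>D \<approx> n/ln n\<close>, with the rounding of \<open>M\<close> and \<open>D\<close> absorbed.\<close>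

definition GV_rate :: "nat \<Rightarrow> real" where
  "GV_rate n = ((real n - real n / ln (real n)) * log 2 (real n / ln (real n) ^ 2 - 1) - real n)
    / (real n * log 2 (real n))"

lemma eventually_DI_rate_ge:
  assumes "0 < \<theta>" "\<theta> < 1" "0 \<le> l1" "0 < l2"
  shows "\<forall>\<^sub>F n in sequentially. ereal (GV_rate n) \<le> DI_rate \<theta> n l1 l2"
proof -
  have "\<forall>\<^sub>F n in sequentially. max (1 / \<theta>) (1 / (1 - \<theta>)) + 2 \<le> real n / ln (real n) ^ 2"
    by real_asymp
  moreover have "\<forall>\<^sub>F n in sequentially. 2 \<le> real n / ln (real n)"
    by real_asymp
  moreover have "\<forall>\<^sub>F n in sequentially. real n / ln (real n) \<le> real n"
    by real_asymp
  moreover have "\<forall>\<^sub>F n in sequentially.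
      ln (1 / l2) \<le> (real n / ln (real n) - 1) / (real n / ln (real n) ^ 2 * \<theta>)"
    using assms(1) by real_asymp
  ultimately show ?thesis
    unfolding GV_rate_def by eventually_elim (rule DI_rate_ge_real_params[OF assms])
qed

lemma GV_rate_tendsto: "(GV_rate \<longlongrightarrow> 1) sequentially"
  unfolding GV_rate_def by real_asymp

lemma one_le_liminf_DI_rate:
  assumes "0 < \<theta>" "\<theta> < 1" "0 \<le> l1" "0 < l2"
  shows "1 \<le> liminf (\<lambda>n. DI_rate \<theta> n l1 l2)"
proof -
  have "liminf (\<lambda>n. ereal (GV_rate n)) = 1"
    using GV_rate_tendsto by (intro lim_imp_Liminf) (auto simp: one_ereal_def)
  moreover have "liminf (\<lambda>n. ereal (GV_rate n)) \<le> liminf (\<lambda>n. DI_rate \<theta> n l1 l2)"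
    using eventually_DI_rate_ge[OF assms] by (rule Liminf_mono)
  ultimately show ?thesis
    by simp
qed

lemma DI_rate_tendsto_1:
  assumes "0 < \<theta>" "\<theta> < 1" "0 < l1" "0 < l2" "l1 + l2 < 1"
  shows "((\<lambda>n. DI_rate \<theta> n l1 l2) \<longlongrightarrow> 1) sequentially"
proof -
  define C where "C = 2 / (\<theta> * (1 - l1 - l2))"
  have "0 < C"
    using assms by (simp add: C_def)
  have lower: "\<forall>\<^sub>F n in sequentially. ereal (GV_rate n) \<le> DI_rate \<theta> n l1 l2"
    using assms by (intro eventually_DI_rate_ge) auto
  have upper: "\<forall>\<^sub>F n in sequentially. DI_rate \<theta> n l1 l2 \<le> ereal (log 2 (C * real n + 1) / log 2 (real n))"
    using eventually_ge_at_top[of 2] unfolding C_def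
    by eventually_elim (intro DI_rate_le_log_linear, insert assms, auto)
  have "((\<lambda>n. log 2 (C * real n + 1) / log 2 (real n)) \<longlongrightarrow> 1) sequentially"
    using \<open>0 < C\<close> by real_asymp
  then show ?thesis
    using GV_rate_tendsto by (intro tendsto_sandwich[OF lower upper]) (simp_all add: one_ereal_def)
qed

theorem theorem10:
  fixes \<theta> :: real
  assumes "0 < \<theta>" and "\<theta> < 1"
  shows "C_DI_dot \<theta> = 1 \<and>
    (\<forall>l1 l2. 0 < l1 \<longrightarrow> 0 < l2 \<longrightarrow> l1 + l2 < 1 \<longrightarrow>
       ((\<lambda>n. DI_rate \<theta> n l1 l2) \<longlongrightarrow> (1::ereal)) sequentially)"
proof
  show "\<forall>l1 l2. 0 < l1 \<longrightarrow> 0 < l2 \<longrightarrow> l1 + l2 < 1 \<longrightarrow>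
      ((\<lambda>n. DI_rate \<theta> n l1 l2) \<longlongrightarrow> (1::ereal)) sequentially"
    using DI_rate_tendsto_1[OF assms] by blast
  have "C_DI_dot \<theta> \<le> (INF l2\<in>{0<..}. liminf (\<lambda>n. DI_rate \<theta> n (1/4) l2))"
    unfolding C_DI_dot_def by (rule INF_lower) simp
  also have "\<dots> \<le> liminf (\<lambda>n. DI_rate \<theta> n (1/4) (1/4))"
    by (rule INF_lower) simp
  also have "\<dots> = 1"
    using DI_rate_tendsto_1[OF assms, of "1/4" "1/4"] by (intro lim_imp_Liminf) auto
  finally have "C_DI_dot \<theta> \<le> 1" .
  moreover have "1 \<le> C_DI_dot \<theta>"
    unfolding C_DI_dot_def by (intro INF_greatest one_le_liminf_DI_rate[OF assms]) auto
  ultimately show "C_DI_dot \<theta> = 1"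
    by (rule antisym)
qed

end
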